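(* Let $\Omega$ be a metrizable separable space, $\mathcal{P}$ a weakly relatively compact set of Borel probability measures on $\Omega$, $1\le p<\infty$, and $c_p=c_{p,\mathcal{P}}$. Then: (i) for every non-negative bounded lower semicontinuous function $g$ on $\Omega$, $c_p(g)=\sup_{Q\in\mathcal{P}}E_Q(g^p)^{1/p}$; (ii) for every Borel function $f$ on $\Omega$, $\sup_{Q\in\mathcal{P}}E_Q(|f|^p)^{1/p}\le c_p(f)$.
   Context: $c_{p,\mathcal{P}}(f)=\sup_{P\in\mathcal{P}}E_P(|f|^p)^{1/p}$ for $f\in\mathcal{C}_b(\Omega)$, extended to all real functions by $c(f)=\sup\{c(\varphi):\varphi\in\mathcal{C}_b(\Omega),0\le\varphi\le f\}$ for $f\ge0$ lower semicontinuous and $c(g)=\inf\{c(f):f\text{ l.s.c.},f\ge|g|\}$ for arbitrary $g$. Weak relative compactness refers to the topology on probability measures making $\mu\mapsto\int f\,d\mu$ continuous for all $f\in\mathcal{C}_b(\Omega)$. *)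

theory Defs
  imports "HOL-Probability.Probability"
begin

definition Cb :: "('a::topological_space \<Rightarrow> real) set" where
  "Cb = {f. continuous_on UNIV f \<and> bounded (range f)}"

definition lsc :: "('a::topological_space \<Rightarrow> real) \<Rightarrow> bool" where
  "lsc f \<longleftrightarrow> (\<forall>a. open {x. a < f x})"

definition borel_probs :: "'a::topological_space measure set" where
  "borel_probs = {M. prob_space M \<and> sets M = sets borel}"

definition weak_topology :: "'a::topological_space measure topology" where
  "weak_topology = topology_generated_by
     {{M \<in> borel_probs. (\<integral>x. f x \<partial>M) \<in> U} | f U. f \<in> Cb \<and> open U}"

definition weakly_rel_compact :: "'a::topological_space measure set \<Rightarrow> bool" where
  "weakly_rel_compact \<P> \<longleftrightarrow> \<P> \<subseteq> borel_probs \<and>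
     compactin weak_topology (weak_topology closure_of \<P>)"

definition enn_root :: "real \<Rightarrow> ennreal \<Rightarrow> ennreal" where
  "enn_root p x = (if x = \<infinity> then \<infinity> else ennreal (enn2real x powr (1 / p)))"

definition Lp_val :: "real \<Rightarrow> 'a measure \<Rightarrow> ('a \<Rightarrow> real) \<Rightarrow> ennreal" where
  "Lp_val p Q f = enn_root p (\<integral>\<^sup>+x. ennreal (\<bar>f x\<bar> powr p) \<partial>Q)"

definition cp_Cb :: "real \<Rightarrow> 'a measure set \<Rightarrow> ('a \<Rightarrow> real) \<Rightarrow> ennreal" where
  "cp_Cb p \<P> f = (SUP Q\<in>\<P>. Lp_val p Q f)"

definition cp_lsc :: "real \<Rightarrow> 'a::topological_space measure set \<Rightarrow> ('a \<Rightarrow> real) \<Rightarrow> ennreal" where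
  "cp_lsc p \<P> f = (SUP \<phi>\<in>{\<phi>\<in>Cb. \<forall>x. 0 \<le> \<phi> x \<and> \<phi> x \<le> f x}. cp_Cb p \<P> \<phi>)"

definition cp :: "real \<Rightarrow> 'a::topological_space measure set \<Rightarrow> ('a \<Rightarrow> real) \<Rightarrow> ennreal" where
  "cp p \<P> g =
     (if g \<in> Cb then cp_Cb p \<P> g
      else if lsc g \<and> (\<forall>x. 0 \<le> g x) then cp_lsc p \<P> g
      else (INF f\<in>{f. lsc f \<and> (\<forall>x. 0 \<le> f x) \<and> (\<forall>x. \<bar>g x\<bar> \<le> f x)}. cp_lsc p \<P> f))"

end

theory Submission
  imports Defs
begin

text \<open>A non-negative lower semicontinuous function h on a metric space is the increasing
  pointwise limit of the bounded Lipschitz functions min n (inf_y h y + n d(x,y)) (Baire).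
  Monotone convergence in each L^p(Q) then shows that E_Q(h^p)^(1/p) is the supremum of
  E_Q(phi^p)^(1/p) over continuous 0 <= phi <= h, and exchanging the suprema over phi and Q
  gives (i), even without boundedness of h. Since c_p(f) is an infimum of c_p(h) over lower
  semicontinuous h >= |f|, each of which dominates sup_Q E_Q(|f|^p)^(1/p) by (i), (ii)
  follows.\<close>

lemma enn_root_mono:
  assumes "p > 0" "x \<le> y" shows "enn_root p x \<le> enn_root p y"
proof (cases "y = \<infinity>")
  case True then show ?thesis by (simp add: enn_root_def)
next
  case False
  then have "x \<noteq> \<infinity>" using assms(2) by (auto simp: top_unique)
  moreover have "enn2real x \<le> enn2real y" using assms(2) False by (simp add: enn2real_mono top.not_eq_extremum)
  ultimately show ?thesis using False assms(1)
    by (auto simp: enn_root_def intro!: ennreal_leI powr_mono2)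
qed

lemma enn_root_Sup:
  assumes "p > 0" shows "enn_root p (Sup A) = (SUP a\<in>A. enn_root p a)"
proof (rule antisym)
  show "(SUP a\<in>A. enn_root p a) \<le> enn_root p (Sup A)"
    by (rule SUP_least, rule enn_root_mono[OF assms Sup_upper])
  show "enn_root p (Sup A) \<le> (SUP a\<in>A. enn_root p a)"
  proof (cases "(SUP a\<in>A. enn_root p a) = \<infinity>")
    case True then show ?thesis unfolding True by simp
  next
    case False
    define r where "r = enn2real (SUP a\<in>A. enn_root p a)"
    have r0: "r \<ge> 0" by (simp add: r_def)
    have sup_eq: "(SUP a\<in>A. enn_root p a) = ennreal r"
      unfolding r_def by (rule ennreal_enn2real[symmetric]) (use False in \<open>simp only: infinity_ennreal_def less_top\<close>)
    have a_le: "a \<le> ennreal (r powr p)" if "a \<in> A" for a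
    proof -
      have le: "enn_root p a \<le> ennreal r" unfolding sup_eq[symmetric] using that by (rule SUP_upper)
      then have fin: "a \<noteq> \<infinity>" by (cases "a = \<infinity>") (simp_all add: enn_root_def top_unique)
      then have "enn2real a powr (1/p) \<le> r" using le r0 by (simp add: enn_root_def)
      then have "(enn2real a powr (1/p)) powr p \<le> r powr p" by (intro powr_mono2) (use assms in auto)
      then have "enn2real a \<le> r powr p" using assms by (simp add: powr_powr)
      then have "ennreal (enn2real a) \<le> ennreal (r powr p)" by (rule ennreal_leI)
      moreover have "ennreal (enn2real a) = a" using fin by (simp add: less_top)
      ultimately show ?thesis by simp
    qed
    then have S: "Sup A \<le> ennreal (r powr p)" by (rule Sup_least)
    have fin: "Sup A \<noteq> \<infinity>"
      using le_less_trans[OF S ennreal_less_top] by (simp only: infinity_ennreal_def less_top)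
    have "enn2real (Sup A) powr (1/p) \<le> (r powr p) powr (1/p)"
      using S by (intro powr_mono2) (use assms in \<open>auto simp: enn2real_leI\<close>)
    also have "\<dots> = r" using assms r0 by (simp add: powr_powr)
    finally have "ennreal (enn2real (Sup A) powr (1/p)) \<le> ennreal r" by (rule ennreal_leI)
    then show ?thesis unfolding sup_eq by (simp only: enn_root_def fin if_False)
  qed
qed

text \<open>The Pasch-Hausdorff envelope of h: for h >= 0 it is the largest L-Lipschitz minorant of h.\<close>

definition lipschitz_minorant :: "('a::metric_space \<Rightarrow> real) \<Rightarrow> real \<Rightarrow> 'a \<Rightarrow> real" where
  "lipschitz_minorant h L x = (INF y. h y + L * dist x y)"

lemma lipschitz_minorant_le:
  assumes "\<And>y. 0 \<le> h y" "0 \<le> L"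
  shows "lipschitz_minorant h L x \<le> h y + L * dist x y"
  unfolding lipschitz_minorant_def
  by (rule cInf_lower) (auto intro!: bdd_belowI[where m=0] add_nonneg_nonneg mult_nonneg_nonneg assms)

lemma lipschitz_minorant_greatest:
  assumes "\<And>y. c \<le> h y + L * dist x y"
  shows "c \<le> lipschitz_minorant h L x"
  unfolding lipschitz_minorant_def by (rule cINF_greatest) (use assms in auto)

lemma lipschitz_minorant_nonneg:
  assumes "\<And>y. 0 \<le> h y" "0 \<le> L"
  shows "0 \<le> lipschitz_minorant h L x"
  by (rule lipschitz_minorant_greatest) (simp add: assms add_nonneg_nonneg)

lemma lipschitz_minorant_le_self:
  assumes "\<And>y. 0 \<le> h y" "0 \<le> L"
  shows "lipschitz_minorant h L x \<le> h x"
  using lipschitz_minorant_le[of h L x x] assms by simp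

lemma lipschitz_minorant_mono:
  assumes "\<And>y. 0 \<le> h y" "0 \<le> L" "L \<le> M"
  shows "lipschitz_minorant h L x \<le> lipschitz_minorant h M x"
proof (rule lipschitz_minorant_greatest)
  fix y
  have "lipschitz_minorant h L x \<le> h y + L * dist x y"
    by (rule lipschitz_minorant_le[OF assms(1,2)])
  also have "\<dots> \<le> h y + M * dist x y" using assms(3) by (intro add_left_mono mult_right_mono) auto
  finally show "lipschitz_minorant h L x \<le> h y + M * dist x y" .
qed

lemma lipschitz_on_lipschitz_minorant:
  assumes "\<And>y. 0 \<le> h y" "0 \<le> L"
  shows "L-lipschitz_on UNIV (lipschitz_minorant h L)"
proof -
  have one_sided: "lipschitz_minorant h L x \<le> lipschitz_minorant h L x' + L * dist x x'" for x x'
  proof -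
    have "lipschitz_minorant h L x - L * dist x x' \<le> lipschitz_minorant h L x'"
    proof (rule lipschitz_minorant_greatest)
      fix y
      have "lipschitz_minorant h L x \<le> h y + L * dist x y" by (rule lipschitz_minorant_le[OF assms])
      also have "\<dots> \<le> h y + L * (dist x x' + dist x' y)"
        using assms(2) by (intro add_left_mono mult_left_mono dist_triangle)
      finally show "lipschitz_minorant h L x - L * dist x x' \<le> h y + L * dist x' y"
        by (simp add: algebra_simps)
    qed
    then show ?thesis by simp
  qed
  show ?thesis
  proof (rule lipschitz_onI)
    fix x x'
    show "dist (lipschitz_minorant h L x) (lipschitz_minorant h L x') \<le> L * dist x x'"
      using one_sided[of x x'] one_sided[of x' x] by (simp add: dist_real_def dist_commute abs_le_iff)
  qed (rule assms(2))
qed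

lemma tendsto_lipschitz_minorant:
  assumes "lsc h" "\<And>y. 0 \<le> h y"
  shows "(\<lambda>n. lipschitz_minorant h (real n) x) \<longlonglongrightarrow> h x"
proof (rule order_tendstoI)
  fix a assume "a < h x"
  define a' where "a' = (a + h x) / 2"
  have "a < a'" "a' < h x" using \<open>a < h x\<close> by (simp_all add: a'_def)
  have "open {y. a' < h y}" using assms(1) by (simp add: lsc_def)
  then obtain d where "d > 0" and ball: "ball x d \<subseteq> {y. a' < h y}"
    using \<open>a' < h x\<close> by (meson mem_Collect_eq open_contains_ball)
  have bound: "a' \<le> lipschitz_minorant h (real n) x" if "h x / d \<le> real n" for n
  proof (rule lipschitz_minorant_greatest)
    fix y
    show "a' \<le> h y + real n * dist x y"
    proof (cases "dist x y < d")
      case True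
      then have "a' < h y" using ball by auto
      then show ?thesis by (simp add: add_increasing2 less_imp_le)
    next
      case False
      have "h x \<le> real n * d" using that \<open>d > 0\<close> by (simp add: field_simps)
      also have "\<dots> \<le> real n * dist x y" using False by (intro mult_left_mono) auto
      finally show ?thesis using \<open>a' < h x\<close> assms(2)[of y] by linarith
    qed
  qed
  have "eventually (\<lambda>n. h x / d \<le> real n) sequentially"
    using eventually_ge_at_top[of "nat \<lceil>h x / d\<rceil>"] by eventually_elim linarith
  then have "eventually (\<lambda>n. a' \<le> lipschitz_minorant h (real n) x) sequentially"
    by (rule eventually_mono) (rule bound)
  then show "eventually (\<lambda>n. a < lipschitz_minorant h (real n) x) sequentially"
    by (rule eventually_mono) (use \<open>a < a'\<close> in linarith)
next
  fix a assume "h x < a"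
  then have "lipschitz_minorant h (real n) x < a" for n
    using lipschitz_minorant_le_self[of h "real n" x, OF assms(2)] by simp
  then show "eventually (\<lambda>n. lipschitz_minorant h (real n) x < a) sequentially" by simp
qed

lemma lsc_incseq_Cb_approx:
  fixes h :: "'a::metric_space \<Rightarrow> real"
  assumes lsc: "lsc h" and nonneg: "\<And>x. 0 \<le> h x"
  obtains \<phi> :: "nat \<Rightarrow> 'a \<Rightarrow> real" where "\<And>n. \<phi> n \<in> Cb"
    "\<And>n x. 0 \<le> \<phi> n x" "\<And>n x. \<phi> n x \<le> h x"
    "\<And>x. incseq (\<lambda>n. \<phi> n x)" "\<And>x. (\<lambda>n. \<phi> n x) \<longlonglongrightarrow> h x"
proof
  let ?F = "\<lambda>n. lipschitz_minorant h (real n)"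
  define \<phi> where "\<phi> n x = min (real n) (?F n x)" for n x
  fix n x
  show "\<phi> n \<in> Cb"
    unfolding Cb_def
  proof (intro CollectI conjI)
    have "continuous_on UNIV (?F n)"
      by (rule lipschitz_on_continuous_on[OF lipschitz_on_lipschitz_minorant]) (simp_all add: nonneg)
    then show "continuous_on UNIV (\<phi> n)" unfolding \<phi>_def by (intro continuous_on_min continuous_on_const)
    show "bounded (range (\<phi> n))" unfolding bounded_real
      by (auto simp: \<phi>_def lipschitz_minorant_nonneg nonneg intro!: exI[of _ "real n"])
  qed
  show "0 \<le> \<phi> n x" by (simp add: \<phi>_def lipschitz_minorant_nonneg nonneg)
  show "\<phi> n x \<le> h x" using lipschitz_minorant_le_self[of h "real n" x, OF nonneg] by (simp add: \<phi>_def)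
  show "incseq (\<lambda>n. \<phi> n x)"
    unfolding incseq_def \<phi>_def by (intro allI impI min.mono lipschitz_minorant_mono nonneg) simp_all
  have "eventually (\<lambda>n. ?F n x = \<phi> n x) sequentially"
    using eventually_ge_at_top[of "nat \<lceil>h x\<rceil>"]
  proof eventually_elim
    case (elim n)
    then have "?F n x \<le> real n"
      using lipschitz_minorant_le_self[of h "real n" x, OF nonneg] by linarith
    then show ?case by (simp add: \<phi>_def)
  qed
  with tendsto_lipschitz_minorant[OF lsc nonneg] show "(\<lambda>n. \<phi> n x) \<longlonglongrightarrow> h x"
    by (rule Lim_transform_eventually)
qed

lemma Lp_val_mono:
  assumes "p > 0" "\<And>x. \<bar>f x\<bar> \<le> \<bar>g x\<bar>"
  shows "Lp_val p Q f \<le> Lp_val p Q g"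
  unfolding Lp_val_def
  by (intro enn_root_mono nn_integral_mono ennreal_leI powr_mono2) (use assms in auto)

lemma Lp_val_monotone_convergence:
  assumes p: "p > 0" and meas: "\<And>n. \<phi> n \<in> borel_measurable Q"
    and nonneg: "\<And>n x. 0 \<le> \<phi> n x" and inc: "\<And>x. incseq (\<lambda>n. \<phi> n x)"
    and lim: "\<And>x. (\<lambda>n. \<phi> n x) \<longlonglongrightarrow> h x"
  shows "Lp_val p Q h = (SUP n. Lp_val p Q (\<phi> n))"
proof -
  define f where "f n x = ennreal (\<bar>\<phi> n x\<bar> powr p)" for n x
  have f_inc: "incseq f"
    by (intro incseq_SucI le_funI)
       (use inc nonneg p in \<open>auto simp: f_def incseq_Suc_iff intro!: ennreal_leI powr_mono2\<close>)
  have f_meas: "f n \<in> borel_measurable Q" for n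
    unfolding f_def using meas[of n] by measurable
  have f_sup: "(SUP n. f n x) = ennreal (\<bar>h x\<bar> powr p)" for x
  proof (rule LIMSEQ_unique)
    show "(\<lambda>n. f n x) \<longlonglongrightarrow> (SUP n. f n x)"
      by (rule LIMSEQ_SUP) (use f_inc in \<open>auto simp: incseq_def le_fun_def\<close>)
    have "(\<lambda>n. \<bar>\<phi> n x\<bar> powr p) \<longlonglongrightarrow> \<bar>h x\<bar> powr p"
      using p by (intro tendsto_powr' tendsto_rabs lim) auto
    then show "(\<lambda>n. f n x) \<longlonglongrightarrow> ennreal (\<bar>h x\<bar> powr p)"
      unfolding f_def by (rule tendsto_ennrealI)
  qed
  have "Lp_val p Q h = enn_root p (\<integral>\<^sup>+x. (SUP n. f n x) \<partial>Q)"
    unfolding Lp_val_def f_sup ..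
  also have "\<dots> = enn_root p (SUP n. integral\<^sup>N Q (f n))"
    by (simp add: nn_integral_monotone_convergence_SUP[OF f_inc f_meas])
  also have "\<dots> = (SUP n. Lp_val p Q (\<phi> n))"
    unfolding enn_root_Sup[OF p] image_image Lp_val_def f_def ..
  finally show ?thesis .
qed

lemma Lp_val_lsc_eq_SUP_Cb:
  fixes h :: "'a::metric_space \<Rightarrow> real"
  assumes p: "p > 0" and sets_Q: "sets Q = sets borel" and lsc: "lsc h" and nonneg: "\<And>x. 0 \<le> h x"
  shows "Lp_val p Q h = (SUP \<phi>\<in>{\<phi>\<in>Cb. \<forall>x. 0 \<le> \<phi> x \<and> \<phi> x \<le> h x}. Lp_val p Q \<phi>)"
proof (rule antisym)
  obtain \<phi> :: "nat \<Rightarrow> 'a \<Rightarrow> real" where Cb: "\<And>n. \<phi> n \<in> Cb"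
    and \<phi>_nonneg: "\<And>n x. 0 \<le> \<phi> n x" and \<phi>_le: "\<And>n x. \<phi> n x \<le> h x"
    and inc: "\<And>x. incseq (\<lambda>n. \<phi> n x)" and lim: "\<And>x. (\<lambda>n. \<phi> n x) \<longlonglongrightarrow> h x"
    using lsc_incseq_Cb_approx[OF lsc nonneg] by blast
  have "\<phi> n \<in> borel_measurable Q" for n
    using Cb[of n] unfolding measurable_cong_sets[OF sets_Q refl] Cb_def
    by (auto intro: borel_measurable_continuous_onI)
  then have "Lp_val p Q h = (SUP n. Lp_val p Q (\<phi> n))"
    by (rule Lp_val_monotone_convergence[OF p _ \<phi>_nonneg inc lim])
  also have "\<dots> \<le> (SUP \<phi>\<in>{\<phi>\<in>Cb. \<forall>x. 0 \<le> \<phi> x \<and> \<phi> x \<le> h x}. Lp_val p Q \<phi>)"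
    by (rule SUP_least, rule SUP_upper) (use Cb \<phi>_nonneg \<phi>_le in auto)
  finally show "Lp_val p Q h \<le> \<dots>" .
  show "(SUP \<phi>\<in>{\<phi>\<in>Cb. \<forall>x. 0 \<le> \<phi> x \<and> \<phi> x \<le> h x}. Lp_val p Q \<phi>) \<le> Lp_val p Q h"
    by (rule SUP_least, rule Lp_val_mono[OF p]) (use nonneg in auto)
qed

lemma cp_lsc_eq_SUP_Lp_val:
  fixes h :: "'a::metric_space \<Rightarrow> real"
  assumes "\<P> \<subseteq> borel_probs" "p > 0" "lsc h" "\<And>x. 0 \<le> h x"
  shows "cp_lsc p \<P> h = (SUP Q\<in>\<P>. Lp_val p Q h)"
proof -
  have "Lp_val p Q h = (SUP \<phi>\<in>{\<phi>\<in>Cb. \<forall>x. 0 \<le> \<phi> x \<and> \<phi> x \<le> h x}. Lp_val p Q \<phi>)" if "Q \<in> \<P>" for Q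
    using that assms by (intro Lp_val_lsc_eq_SUP_Cb) (auto simp: borel_probs_def)
  then show ?thesis
    unfolding cp_lsc_def cp_Cb_def by (subst SUP_commute) simp
qed

lemma cp_eq_SUP_Lp_val_lsc:
  fixes g :: "'a::metric_space \<Rightarrow> real"
  assumes "\<P> \<subseteq> borel_probs" "p > 0" "lsc g" "\<And>x. 0 \<le> g x"
  shows "cp p \<P> g = (SUP Q\<in>\<P>. Lp_val p Q g)"
  using cp_lsc_eq_SUP_Lp_val[OF assms] assms(3,4) by (simp add: cp_def cp_Cb_def)

lemma SUP_Lp_val_le_cp:
  fixes f :: "'a::metric_space \<Rightarrow> real"
  assumes "\<P> \<subseteq> borel_probs" "p > 0"
  shows "(SUP Q\<in>\<P>. Lp_val p Q f) \<le> cp p \<P> f"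
proof -
  have "(SUP Q\<in>\<P>. Lp_val p Q f) \<le> cp_lsc p \<P> h" if "lsc h" "\<forall>x. 0 \<le> h x" "\<forall>x. \<bar>f x\<bar> \<le> h x" for h
  proof -
    have "(SUP Q\<in>\<P>. Lp_val p Q f) \<le> (SUP Q\<in>\<P>. Lp_val p Q h)"
      by (rule SUP_mono'[rule_format], rule Lp_val_mono[OF assms(2)]) (use that in auto)
    also have "\<dots> = cp_lsc p \<P> h" using cp_lsc_eq_SUP_Lp_val[OF assms] that by simp
    finally show ?thesis .
  qed
  then show ?thesis
    using cp_eq_SUP_Lp_val_lsc[OF assms, of f] by (auto simp: cp_def cp_Cb_def intro!: INF_greatest)
qed

theorem proposition4p4:
  fixes \<P> :: "'a::{metric_space, second_countable_topology} measure set"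
    and p :: real
  assumes "weakly_rel_compact \<P>"
    and "1 \<le> p"
  shows "(\<forall>g::'a \<Rightarrow> real. (\<forall>x. 0 \<le> g x) \<and> bounded (range g) \<and> lsc g \<longrightarrow>
            cp p \<P> g = (SUP Q\<in>\<P>. Lp_val p Q g))
       \<and> (\<forall>f::'a \<Rightarrow> real. f \<in> borel_measurable borel \<longrightarrow>
            (SUP Q\<in>\<P>. Lp_val p Q f) \<le> cp p \<P> f)"
proof -
  have P: "\<P> \<subseteq> borel_probs" using assms(1) by (simp add: weakly_rel_compact_def)
  have p: "p > 0" using assms(2) by simp
  show ?thesis using cp_eq_SUP_Lp_val_lsc[OF P p] SUP_Lp_val_le_cp[OF P p] by blast
qed

end
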